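(* Let $n\ge1$, $d=2^n$, and let $\mathbb{E}_U$ denote the average over Haar-random $U\in\mathcal{U}(d)$. Then $\mathbb{E}_U[\mathcal{M}_{lin}(U)]=1-\frac{4}{d+3}$, and consequently $\mathbb{E}_U[\mathcal{M}_2(U)]\ge-\log\big(1-\mathbb{E}_U[\mathcal{M}_{lin}(U)]\big)=\log\frac{d+3}{4}$.
   Context: Logarithms are base 2. $\mathcal{P}_n$ is the set of the $4^n$ $n$-qubit Pauli strings $\sigma_1\otimes\cdots\otimes\sigma_n$, $\sigma_i\in\{I,X,Y,Z\}$. For a pure state, $M_{lin}(|\psi\rangle)=1-d^{-1}\sum_{P\in\mathcal{P}_n}\langle\psi|P|\psi\rangle^4$ and $M_2(|\psi\rangle)=-\log(1-M_{lin}(|\psi\rangle))=-\log\big(d^{-1}\sum_P\langle\psi|P|\psi\rangle^4\big)$. $\mathrm{STAB}$ is the finite set of $n$-qubit pure stabilizer states (states $C|0\rangle^{\otimes n}$ with $C$ a Clifford unitary, i.e. $CPC^\dagger\in\{\pm1,\pm i\}\mathcal{P}_n$ for all $P$). The non-stabilizing powers are $\mathcal{M}_{lin}(U)=\frac{1}{|\mathrm{STAB}|}\sum_{|\psi\rangle\in\mathrm{STAB}}M_{lin}(U|\psi\rangle)$ and $\mathcal{M}_2(U)=\frac{1}{|\mathrm{STAB}|}\sum_{|\psi\rangle\in\mathrm{STAB}}M_2(U|\psi\rangle)$. *)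

theory Defs
  imports "HOL-Probability.Probability"
begin

text \<open>The n qubits are indexed by a finite type 'n (so n = CARD('n) \<ge> 1),
  computational basis states are bit strings 'n \<Rightarrow> bool (d = 2^n of them), and
  operators on the d-dimensional Hilbert space are matrices complex^('n\<Rightarrow>bool)^('n\<Rightarrow>bool),
  with M $ x $ y the entry in row x, column y.\<close>

type_synonym 'n qmat = "complex ^ ('n \<Rightarrow> bool) ^ ('n \<Rightarrow> bool)"
type_synonym 'n qvec = "complex ^ ('n \<Rightarrow> bool)"

definition qdim :: "'n::finite itself \<Rightarrow> nat" where
  "qdim _ = 2 ^ CARD('n)"

definition adj :: "'n::finite qmat \<Rightarrow> 'n qmat" where
  "adj A = (\<chi> i j. cnj (A $ j $ i))"

definition tr :: "'n::finite qmat \<Rightarrow> complex" where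
  "tr A = (\<Sum>i\<in>UNIV. A $ i $ i)"

definition cscale :: "complex \<Rightarrow> 'n::finite qmat \<Rightarrow> 'n qmat" where
  "cscale c A = (\<chi> i j. c * A $ i $ j)"

definition unitary_group :: "'n::finite qmat set" where
  "unitary_group = {U. U ** adj U = mat 1 \<and> adj U ** U = mat 1}"

datatype pauli = PI | PX | PY | PZ

lemma UNIV_pauli: "(UNIV :: pauli set) = {PI, PX, PY, PZ}"
  using pauli.exhaust by auto

instance pauli :: finite
  by standard (simp add: UNIV_pauli)

text \<open>Single-qubit Pauli matrices, basis |0> = False, |1> = True.\<close>
fun pauli_entry :: "pauli \<Rightarrow> bool \<Rightarrow> bool \<Rightarrow> complex" where
  "pauli_entry PI a b = (if a = b then 1 else 0)"
| "pauli_entry PX a b = (if a \<noteq> b then 1 else 0)"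
| "pauli_entry PY a b = (if a = b then 0 else if a then \<i> else - \<i>)"
| "pauli_entry PZ a b = (if a = b then (if a then -1 else 1) else 0)"

definition pauli_string :: "('n::finite \<Rightarrow> pauli) \<Rightarrow> 'n qmat" where
  "pauli_string s = (\<chi> x y. \<Prod>k\<in>UNIV. pauli_entry (s k) (x k) (y k))"

definition pauli_group_set :: "'n::finite qmat set" where
  "pauli_group_set = range pauli_string"

definition clifford :: "'n::finite qmat set" where
  "clifford = {C \<in> unitary_group. \<forall>P \<in> pauli_group_set.
       \<exists>c \<in> {1, -1, \<i>, - \<i>}. \<exists>Q \<in> pauli_group_set. C ** P ** adj C = cscale c Q}"

definition ket0 :: "'n::finite qvec" where
  "ket0 = (\<chi> x. if x = (\<lambda>_. False) then 1 else 0)"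

definition proj :: "'n::finite qvec \<Rightarrow> 'n qmat" where
  "proj \<psi> = (\<chi> i j. \<psi> $ i * cnj (\<psi> $ j))"

text \<open>Pure stabilizer states, represented (up to global phase) by their projectors
  |psi><psi|, psi = C|0...0>, C Clifford. This is a finite set.\<close>
definition STAB :: "'n::finite qmat set" where
  "STAB = {proj (C *v ket0) | C. C \<in> clifford}"

text \<open>For a pure state rho = |psi><psi|, <psi|P|psi> = tr(P rho) (a real number).\<close>
definition pauli_exp :: "('n::finite \<Rightarrow> pauli) \<Rightarrow> 'n qmat \<Rightarrow> real" where
  "pauli_exp s \<rho> = Re (tr (pauli_string s ** \<rho>))"

definition Mlin :: "'n::finite qmat \<Rightarrow> real" where
  "Mlin \<rho> = 1 - (1 / real (qdim TYPE('n))) * (\<Sum>s\<in>UNIV. (pauli_exp s \<rho>) ^ 4)"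

definition M2 :: "'n::finite qmat \<Rightarrow> real" where
  "M2 \<rho> = - log 2 ((1 / real (qdim TYPE('n))) * (\<Sum>s\<in>UNIV. (pauli_exp s \<rho>) ^ 4))"

definition NSlin :: "'n::finite qmat \<Rightarrow> real" where
  "NSlin U = (\<Sum>\<rho>\<in>STAB. Mlin (U ** \<rho> ** adj U)) / real (card (STAB :: 'n qmat set))"

definition NS2 :: "'n::finite qmat \<Rightarrow> real" where
  "NS2 U = (\<Sum>\<rho>\<in>STAB. M2 (U ** \<rho> ** adj U)) / real (card (STAB :: 'n qmat set))"

text \<open>Normalized Haar measure on U(d): a Borel probability measure concentrated on the
  unitary group and invariant under left multiplication by unitaries (unique).\<close>
definition haar_unitary :: "'n::finite qmat measure \<Rightarrow> bool" where
  "haar_unitary \<mu> \<longleftrightarrow> prob_space \<mu> \<and> sets \<mu> = sets borel \<and>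
     emeasure \<mu> unitary_group = 1 \<and>
     (\<forall>V \<in> unitary_group. distr \<mu> borel (\<lambda>U. V ** U) = \<mu>)"

end

theory Submission
  imports Defs
begin

text \<open>For a unit vector \<open>\<phi>\<close>, the law of \<open>U\<phi>\<close> with \<open>U\<close> Haar distributed is a probability
  measure on the unit sphere that is invariant under all unitaries. Invariance under two-level
  unitaries (phases, swaps and a Hadamard gate acting on two basis vectors) already determines the
  fourth moments of the populations \<open>|w\<^sub>x|\<^sup>2\<close> up to one constant:
  \<open>E |w\<^sub>a|\<^sup>2|w\<^sub>b|\<^sup>2|w\<^sub>c|\<^sup>2|w\<^sub>e|\<^sup>2\<close> is proportional to the product of the factorials of the
  multiplicities in \<open>(a, b, c, e)\<close>, and normalisation fixes the constant to
  \<open>1 / (d(d+1)(d+2)(d+3))\<close>. A Pauli string is conjugate, by a tensor product of one-qubit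
  unitaries, to a diagonal \<open>\<plusminus>1\<close> matrix whose trace vanishes unless the string is the identity;
  hence \<open>E\<langle>P\<rangle>\<^sup>4 = 3 / ((d+1)(d+3))\<close> for \<open>P \<noteq> I\<close>, and summing over the \<open>d\<^sup>2\<close> Pauli strings gives
  \<open>E (d\<^sup>-\<^sup>1 \<Sum>\<^sub>P \<langle>P\<rangle>\<^sup>4) = 4 / (d + 3)\<close> for every initial state. Averaging over the finitely many
  stabilizer states yields the value of the linear stabilizer entropy, and Jensen's inequality for
  the convex function \<open>-log\<close> yields the bound for \<open>M\<^sub>2\<close>.\<close>

definition qform :: "'n::finite qmat \<Rightarrow> 'n qvec \<Rightarrow> complex" where
  "qform A w = (\<Sum>x\<in>UNIV. cnj (w $ x) * (A *v w) $ x)"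

lemma power2_norm_vec: "(norm (w :: 'a::real_normed_vector ^ 'm::finite))\<^sup>2 = (\<Sum>i\<in>UNIV. (norm (w $ i))\<^sup>2)"
  by (simp add: norm_vec_def L2_set_def sum_nonneg)

lemma sum_cnj_adj:
  "(\<Sum>x\<in>UNIV. cnj ((W *v u) $ x) * v $ x) = (\<Sum>y\<in>UNIV. cnj (u $ y) * (adj W *v v) $ y)"
  unfolding matrix_vector_mult_def adj_def
  by (simp add: sum_distrib_left sum_distrib_right mult_ac) (rule sum.swap)

lemma continuous_on_matrix_mult [continuous_intros]: "continuous_on A (\<lambda>U :: 'n::finite qmat. V ** U)"
  unfolding matrix_matrix_mult_def by (intro continuous_intros)

lemma continuous_on_matrix_vector_mult [continuous_intros]:
  "continuous_on A (\<lambda>U :: 'n::finite qmat. U *v \<phi>)"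
  unfolding matrix_vector_mult_def by (intro continuous_intros)

lemma continuous_on_matrix_vector_mult_right [continuous_intros]:
  "continuous_on A (\<lambda>w :: 'n::finite qvec. V *v w)"
  unfolding matrix_vector_mult_def by (intro continuous_intros)

lemma continuous_on_qform [continuous_intros]: "continuous_on A (\<lambda>w. qform M w)"
  unfolding qform_def by (intro continuous_intros)

lemma qform_matrix_vector_mult: "qform A (W *v w) = qform (adj W ** A ** W) w"
  by (simp add: qform_def sum_cnj_adj matrix_vector_mul_assoc matrix_mul_assoc)

lemma qform_one: "qform (mat 1) w = (norm w)\<^sup>2"
  by (simp add: qform_def power2_norm_vec complex_mult_cnj cmod_power2 mult.commute
      flip: complex_norm_square)

lemma tr_mult_proj: "tr (A ** proj w) = qform A w"
  by (simp add: tr_def qform_def proj_def matrix_matrix_mult_def matrix_vector_mult_def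
      sum_distrib_left mult_ac)

lemma conj_proj: "U ** proj w ** adj U = proj (U *v w)"
  by (simp add: vec_eq_iff proj_def adj_def matrix_matrix_mult_def matrix_vector_mult_def
      sum_distrib_left sum_distrib_right mult_ac)

lemma norm_unitary_mult: "U \<in> unitary_group \<Longrightarrow> norm (U *v w) = norm w"
  using qform_matrix_vector_mult[of "mat 1" U w]
  by (simp add: unitary_group_def qform_one flip: of_real_power)

section \<open>Two-level unitaries\<close>

definition two_level ::
    "('n::finite \<Rightarrow> bool) \<Rightarrow> ('n \<Rightarrow> bool) \<Rightarrow> complex \<Rightarrow> complex \<Rightarrow> complex \<Rightarrow> complex \<Rightarrow> 'n qmat"
  where "two_level a b \<alpha> \<beta> \<gamma> \<delta> =
    (\<chi> x y. if x = a then (if y = a then \<alpha> else if y = b then \<beta> else 0)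
      else if x = b then (if y = a then \<gamma> else if y = b then \<delta> else 0)
      else of_bool (x = y))"

lemma two_level_apply:
  assumes "a \<noteq> b"
  shows "(two_level a b \<alpha> \<beta> \<gamma> \<delta> *v w) $ x =
    (if x = a then \<alpha> * w $ a + \<beta> * w $ b else if x = b then \<gamma> * w $ a + \<delta> * w $ b else w $ x)"
proof -
  have "(\<Sum>y\<in>UNIV. (if y = a then \<alpha> else if y = b then \<beta> else 0) * w $ y)
      = (\<Sum>y\<in>UNIV. (if y = a then \<alpha> * w $ y else 0) + (if y = b then \<beta> * w $ y else 0))"
    for \<alpha> \<beta> using assms by (intro sum.cong) auto
  then show ?thesis
    by (simp add: two_level_def matrix_vector_mult_def sum.distrib)
qed

lemma two_level_mult:
  assumes "a \<noteq> b"
  shows "two_level a b \<alpha> \<beta> \<gamma> \<delta> ** two_level a b \<alpha>' \<beta>' \<gamma>' \<delta>' =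
    two_level a b (\<alpha> * \<alpha>' + \<beta> * \<gamma>') (\<alpha> * \<beta>' + \<beta> * \<delta>') (\<gamma> * \<alpha>' + \<delta> * \<gamma>') (\<gamma> * \<beta>' + \<delta> * \<delta>')"
proof -
  have col: "(A ** B) $ x $ y = (A *v (\<chi> k. B $ k $ y)) $ x" for A B :: "'a qmat" and x y
    by (simp add: matrix_matrix_mult_def matrix_vector_mult_def)
  show ?thesis
    using assms unfolding vec_eq_iff col two_level_apply[OF assms] by (auto simp: two_level_def)
qed

lemma adj_two_level: "adj (two_level a b \<alpha> \<beta> \<gamma> \<delta>) = two_level a b (cnj \<alpha>) (cnj \<gamma>) (cnj \<beta>) (cnj \<delta>)"
  by (auto simp: vec_eq_iff adj_def two_level_def)

lemma two_level_unitary: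
  assumes "a \<noteq> b"
    and "\<alpha> * cnj \<alpha> + \<beta> * cnj \<beta> = 1" "\<alpha> * cnj \<gamma> + \<beta> * cnj \<delta> = 0" "\<gamma> * cnj \<gamma> + \<delta> * cnj \<delta> = 1"
    and "cnj \<alpha> * \<alpha> + cnj \<gamma> * \<gamma> = 1" "cnj \<alpha> * \<beta> + cnj \<gamma> * \<delta> = 0" "cnj \<beta> * \<beta> + cnj \<delta> * \<delta> = 1"
  shows "two_level a b \<alpha> \<beta> \<gamma> \<delta> \<in> unitary_group"
proof -
  have "\<gamma> * cnj \<alpha> + \<delta> * cnj \<beta> = 0" "cnj \<beta> * \<alpha> + cnj \<delta> * \<gamma> = 0"
    using arg_cong[OF assms(3), of cnj] arg_cong[OF assms(6), of cnj] by (simp_all add: mult.commute)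
  moreover have "two_level a b 1 0 0 1 = mat 1"
    using assms(1) by (auto simp: vec_eq_iff two_level_def mat_def)
  ultimately show ?thesis
    using assms by (simp add: unitary_group_def adj_two_level two_level_mult)
qed

abbreviation phase_gate :: "('n::finite \<Rightarrow> bool) \<Rightarrow> ('n \<Rightarrow> bool) \<Rightarrow> complex \<Rightarrow> 'n qmat" where
  "phase_gate a b z \<equiv> two_level a b z 0 0 1"

abbreviation swap_gate :: "('n::finite \<Rightarrow> bool) \<Rightarrow> ('n \<Rightarrow> bool) \<Rightarrow> 'n qmat" where
  "swap_gate a b \<equiv> two_level a b 0 1 1 0"

definition inv_sqrt2 :: complex where "inv_sqrt2 = of_real (1 / sqrt 2)"

abbreviation hadamard_gate :: "('n::finite \<Rightarrow> bool) \<Rightarrow> ('n \<Rightarrow> bool) \<Rightarrow> 'n qmat" where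
  "hadamard_gate a b \<equiv> two_level a b inv_sqrt2 inv_sqrt2 inv_sqrt2 (- inv_sqrt2)"

lemma inv_sqrt2_simps [simp]: "inv_sqrt2 * inv_sqrt2 = 1 / 2" "cnj inv_sqrt2 = inv_sqrt2"
  by (simp_all add: inv_sqrt2_def flip: of_real_mult)

lemma phase_gate_unitary: "a \<noteq> b \<Longrightarrow> cmod z = 1 \<Longrightarrow> phase_gate a b z \<in> unitary_group"
  using complex_norm_square[of z] by (intro two_level_unitary) (auto simp: mult.commute)

lemma swap_gate_unitary: "a \<noteq> b \<Longrightarrow> swap_gate a b \<in> unitary_group"
  by (rule two_level_unitary) auto

lemma hadamard_gate_unitary: "a \<noteq> b \<Longrightarrow> hadamard_gate a b \<in> unitary_group"
  by (rule two_level_unitary) auto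

section \<open>Fourth moments of a unitarily invariant random state\<close>

definition born :: "('n::finite \<Rightarrow> bool) \<Rightarrow> 'n qvec \<Rightarrow> real" where
  "born x w = (cmod (w $ x))\<^sup>2"

definition coh_re :: "('n::finite \<Rightarrow> bool) \<Rightarrow> ('n \<Rightarrow> bool) \<Rightarrow> 'n qvec \<Rightarrow> real" where
  "coh_re a b w = Re (w $ a * cnj (w $ b))"

definition coh_im :: "('n::finite \<Rightarrow> bool) \<Rightarrow> ('n \<Rightarrow> bool) \<Rightarrow> 'n qvec \<Rightarrow> real" where
  "coh_im a b w = Im (w $ a * cnj (w $ b))"

lemma continuous_on_born [continuous_intros]: "continuous_on A (born x)"
  unfolding born_def by (intro continuous_intros)

lemma continuous_on_coh_re [continuous_intros]: "continuous_on A (coh_re a b)"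
  unfolding coh_re_def by (intro continuous_intros)

lemma continuous_on_coh_im [continuous_intros]: "continuous_on A (coh_im a b)"
  unfolding coh_im_def by (intro continuous_intros)

lemma coh_re_sq_plus_coh_im_sq: "(coh_re a b w)\<^sup>2 + (coh_im a b w)\<^sup>2 = born a w * born b w"
  unfolding coh_re_def coh_im_def born_def
  by (simp add: cmod_power2) (simp add: power2_eq_square algebra_simps)

lemma sum_born: "(\<Sum>x\<in>UNIV. born x w) = (norm w)\<^sup>2"
  by (simp add: born_def power2_norm_vec)

lemma born_phase_gate: "a \<noteq> b \<Longrightarrow> cmod z = 1 \<Longrightarrow> born x (phase_gate a b z *v w) = born x w"
  by (simp add: born_def two_level_apply norm_mult)

lemma coh_re_phase_gate:
  "a \<noteq> b \<Longrightarrow> coh_re a b (phase_gate a b z *v w) = Re z * coh_re a b w - Im z * coh_im a b w"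
  by (simp add: coh_re_def coh_im_def two_level_apply algebra_simps)

lemma born_swap_gate:
  "a \<noteq> b \<Longrightarrow> born x (swap_gate a b *v w) = born (if x = a then b else if x = b then a else x) w"
  by (simp add: born_def two_level_apply)

lemma coh_swap_gate:
  assumes "a \<noteq> b"
  shows "coh_re a b (swap_gate a b *v w) = coh_re a b w"
    and "coh_im a b (swap_gate a b *v w) = - coh_im a b w"
  using assms by (simp_all add: coh_re_def coh_im_def two_level_apply mult.commute)

lemma born_hadamard_gate:
  assumes "a \<noteq> b"
  shows "born x (hadamard_gate a b *v w) =
    (if x = a then (born a w + born b w) / 2 + coh_re a b w
     else if x = b then (born a w + born b w) / 2 - coh_re a b w
     else born x w)"
proof -
  have half: "(cmod (inv_sqrt2 * z))\<^sup>2 = (cmod z)\<^sup>2 / 2" for z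
    by (simp add: inv_sqrt2_def norm_mult norm_divide power_divide)
  have "(hadamard_gate a b *v w) $ a = inv_sqrt2 * (w $ a + w $ b)"
    and "(hadamard_gate a b *v w) $ b = inv_sqrt2 * (w $ a - w $ b)"
    using assms by (simp_all add: two_level_apply distrib_left right_diff_distrib)
  moreover have "(cmod (z + u))\<^sup>2 = (cmod z)\<^sup>2 + (cmod u)\<^sup>2 + 2 * Re (z * cnj u)"
    and "(cmod (z - u))\<^sup>2 = (cmod z)\<^sup>2 + (cmod u)\<^sup>2 - 2 * Re (z * cnj u)" for z u
    by (simp_all add: cmod_power2) (simp_all add: power2_eq_square algebra_simps)
  ultimately show ?thesis
    using assms by (simp add: born_def coh_re_def half two_level_apply add_divide_distrib diff_divide_distrib)
qed

locale unitarily_invariant = prob_space \<nu> for \<nu> :: "'n::finite qvec measure" +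
  assumes sets_eq: "sets \<nu> = sets borel"
    and AE_norm_eq_1: "AE w in \<nu>. norm w = 1"
    and distr_unitary: "V \<in> unitary_group \<Longrightarrow> distr \<nu> borel (\<lambda>w. V *v w) = \<nu>"
begin

lemma measurable_continuous: "continuous_on UNIV f \<Longrightarrow> f \<in> borel_measurable \<nu>"
  unfolding measurable_cong_sets[OF sets_eq refl] by (rule borel_measurable_continuous_onI)

lemma integrable_continuous_on_sphere:
  fixes f :: "'n qvec \<Rightarrow> real"
  assumes "f \<in> borel_measurable \<nu>" and "continuous_on (sphere 0 1) f"
  shows "integrable \<nu> f"
proof -
  have "compact (f ` sphere 0 1)"
    using assms(2) by (intro compact_continuous_image) auto
  then obtain B where "\<forall>y\<in>f ` sphere 0 1. norm y \<le> B"
    using compact_imp_bounded bounded_iff by metis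
  then show ?thesis
    using assms(1) AE_norm_eq_1 by (intro integrable_const_bound[where B = B]) auto
qed

lemma integrable_continuous:
  fixes f :: "'n qvec \<Rightarrow> real"
  shows "continuous_on UNIV f \<Longrightarrow> integrable \<nu> f"
  by (auto intro: integrable_continuous_on_sphere measurable_continuous continuous_on_subset)

lemma expectation_unitary:
  fixes f :: "'n qvec \<Rightarrow> real"
  assumes V: "V \<in> unitary_group" and f: "continuous_on UNIV f"
  shows "expectation (\<lambda>w. f (V *v w)) = expectation f"
proof -
  have "(\<lambda>w. V *v w) \<in> measurable \<nu> borel"
    by (intro measurable_continuous continuous_intros)
  moreover have "f \<in> borel_measurable borel"
    using f by (rule borel_measurable_continuous_onI)
  ultimately show ?thesis
    using integral_distr[of "\<lambda>w. V *v w" \<nu> borel f] by (simp add: distr_unitary[OF V])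
qed

lemma expectation_odd:
  fixes f :: "'n qvec \<Rightarrow> real"
  assumes "V \<in> unitary_group" and "continuous_on UNIV f" and "\<And>w. f (V *v w) = - f w"
  shows "expectation f = 0"
  using expectation_unitary[OF assms(1,2)] by (simp add: assms(3))

lemma expectation_cong_sphere:
  fixes f g :: "'n qvec \<Rightarrow> real"
  assumes "continuous_on UNIV f" "continuous_on UNIV g" "\<And>w. norm w = 1 \<Longrightarrow> f w = g w"
  shows "expectation f = expectation g"
  using assms AE_norm_eq_1 by (intro integral_cong_AE measurable_continuous) auto

lemma expectation_add:
  fixes f g :: "'n qvec \<Rightarrow> real"
  shows "continuous_on UNIV f \<Longrightarrow> continuous_on UNIV g \<Longrightarrow>
    expectation (\<lambda>w. f w + g w) = expectation f + expectation g"
  by (intro Bochner_Integration.integral_add integrable_continuous)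

lemma expectation_diff:
  fixes f g :: "'n qvec \<Rightarrow> real"
  shows "continuous_on UNIV f \<Longrightarrow> continuous_on UNIV g \<Longrightarrow>
    expectation (\<lambda>w. f w - g w) = expectation f - expectation g"
  by (intro Bochner_Integration.integral_diff integrable_continuous)

lemma expectation_sum:
  fixes f :: "'i \<Rightarrow> 'n qvec \<Rightarrow> real"
  shows "(\<And>i. i \<in> I \<Longrightarrow> continuous_on UNIV (f i)) \<Longrightarrow>
    expectation (\<lambda>w. \<Sum>i\<in>I. f i w) = (\<Sum>i\<in>I. expectation (f i))"
  by (intro Bochner_Integration.integral_sum integrable_continuous)

text \<open>Rewrite rules splitting the expectation of a polynomial in populations and coherences into
  expectations of monomials; the simplifier discharges the continuity side conditions.\<close>
lemmas expectation_linear = expectation_add expectation_diff integral_mult_right_zero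
  continuous_on_add continuous_on_diff continuous_on_mult continuous_on_power continuous_on_const
  continuous_on_born continuous_on_coh_re continuous_on_coh_im

lemma expectation_coh_re_odd:
  assumes ab: "a \<noteq> b" and G: "continuous_on UNIV G"
    and G_flip: "\<And>w. G (phase_gate a b (-1) *v w) = G w"
  shows "expectation (\<lambda>w. coh_re a b w * G w) = 0"
    and "expectation (\<lambda>w. coh_re a b w ^ 3 * G w) = 0"
  using ab by (auto intro!: expectation_odd[OF phase_gate_unitary[of a b "-1"]] continuous_intros G
      simp: coh_re_phase_gate G_flip)

lemma expectation_coh_re_sq:
  assumes ab: "a \<noteq> b" and G: "continuous_on UNIV G"
    and G_phase: "\<And>w. G (phase_gate a b \<i> *v w) = G w"
  shows "expectation (\<lambda>w. (coh_re a b w)\<^sup>2 * G w) = expectation (\<lambda>w. born a w * born b w * G w) / 2"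
proof -
  have "expectation (\<lambda>w. (coh_re a b w)\<^sup>2 * G w)
      = expectation (\<lambda>w. (coh_re a b (phase_gate a b \<i> *v w))\<^sup>2 * G (phase_gate a b \<i> *v w))"
    using ab by (intro expectation_unitary[symmetric] phase_gate_unitary continuous_intros G) auto
  also have "\<dots> = expectation (\<lambda>w. (coh_im a b w)\<^sup>2 * G w)"
    using ab by (simp add: coh_re_phase_gate G_phase)
  finally have "expectation (\<lambda>w. (coh_re a b w)\<^sup>2 * G w) = expectation (\<lambda>w. (coh_im a b w)\<^sup>2 * G w)" .
  moreover have "expectation (\<lambda>w. born a w * born b w * G w)
      = expectation (\<lambda>w. (coh_re a b w)\<^sup>2 * G w) + expectation (\<lambda>w. (coh_im a b w)\<^sup>2 * G w)"
    by (simp flip: coh_re_sq_plus_coh_im_sq add: distrib_right expectation_add continuous_intros G)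
  ultimately show ?thesis by simp
qed

text \<open>Phases that are powers of \<open>\<i>\<close> only show that the real and imaginary parts of a coherence
  are equidistributed; the phase \<open>(3 + 4\<i>)/5\<close> mixes them and produces the missing relation.\<close>
lemma expectation_coh_re4:
  assumes ab: "a \<noteq> b"
  shows "expectation (\<lambda>w. coh_re a b w ^ 4) = 3/8 * expectation (\<lambda>w. (born a w)\<^sup>2 * (born b w)\<^sup>2)"
proof -
  let ?r = "coh_re a b" and ?s = "coh_im a b"
  let ?R = "expectation (\<lambda>w. ?r w ^ 4)" and ?S = "expectation (\<lambda>w. ?s w ^ 4)"
  let ?X = "expectation (\<lambda>w. (?r w)\<^sup>2 * (?s w)\<^sup>2)"
  have phase_inv: "expectation f = expectation (\<lambda>w. f (phase_gate a b z *v w))"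
    if "cmod z = 1" "continuous_on UNIV f" for z and f :: "'n qvec \<Rightarrow> real"
    using ab that by (intro expectation_unitary[symmetric] phase_gate_unitary)
  have "?R = ?S"
    using phase_inv[of \<i> "\<lambda>w. ?r w ^ 4"] ab by (simp add: coh_re_phase_gate continuous_intros)
  have odd: "expectation (\<lambda>w. ?r w ^ 3 * ?s w) = 0" "expectation (\<lambda>w. ?r w * ?s w ^ 3) = 0"
    using ab by (auto intro!: expectation_odd[OF swap_gate_unitary] continuous_intros
        simp: coh_swap_gate)
  define z :: complex where "z = (3 + 4 * \<i>) / 5"
  have "cmod z = 1" by (simp add: z_def cmod_def power2_eq_square)
  then have "?R = expectation (\<lambda>w. (3/5 * ?r w - 4/5 * ?s w) ^ 4)"
    using phase_inv[of z "\<lambda>w. ?r w ^ 4"] ab by (simp add: coh_re_phase_gate z_def continuous_intros)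
  also have "\<dots> = expectation (\<lambda>w. 81/625 * ?r w ^ 4 - 432/625 * (?r w ^ 3 * ?s w)
      + 864/625 * ((?r w)\<^sup>2 * (?s w)\<^sup>2) - 768/625 * (?r w * ?s w ^ 3) + 256/625 * ?s w ^ 4)"
    by (rule Bochner_Integration.integral_cong[OF refl]) algebra
  also have "\<dots> = 81/625 * ?R + 864/625 * ?X + 256/625 * ?S"
    by (simp only: expectation_linear odd)
  finally have "?R = 81/625 * ?R + 864/625 * ?X + 256/625 * ?S" .
  moreover have "expectation (\<lambda>w. (born a w)\<^sup>2 * (born b w)\<^sup>2) =
      expectation (\<lambda>w. ?r w ^ 4 + 2 * ((?r w)\<^sup>2 * (?s w)\<^sup>2) + ?s w ^ 4)"
    by (rule Bochner_Integration.integral_cong[OF refl])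
      (simp flip: power_mult_distrib coh_re_sq_plus_coh_im_sq, algebra)
  moreover have "\<dots> = ?R + 2 * ?X + ?S"
    by (simp only: expectation_linear)
  ultimately show ?thesis using \<open>?R = ?S\<close> by simp
qed

lemma expectation_born_hadamard:
  assumes ab: "a \<noteq> b" and G: "continuous_on UNIV G"
    and G_hadamard: "\<And>w. G (hadamard_gate a b *v w) = G w"
    and G_phase: "\<And>w. G (phase_gate a b \<i> *v w) = G w"
  shows "expectation (\<lambda>w. born a w * born b w * G w) =
    (expectation (\<lambda>w. (born a w)\<^sup>2 * G w) + expectation (\<lambda>w. (born b w)\<^sup>2 * G w)) / 4"
proof -
  let ?Y = "expectation (\<lambda>w. born a w * born b w * G w)"
  have "?Y = expectation (\<lambda>w. born a (hadamard_gate a b *v w) * born b (hadamard_gate a b *v w)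
      * G (hadamard_gate a b *v w))"
    using ab by (intro expectation_unitary[symmetric] hadamard_gate_unitary continuous_intros G)
  also have "\<dots> = expectation (\<lambda>w. 1/4 * ((born a w)\<^sup>2 * G w) + 1/2 * (born a w * born b w * G w)
      + 1/4 * ((born b w)\<^sup>2 * G w) - (coh_re a b w)\<^sup>2 * G w)"
    by (rule Bochner_Integration.integral_cong[OF refl])
      (use ab in \<open>simp add: born_hadamard_gate G_hadamard power2_eq_square field_simps\<close>)
  also have "\<dots> = 1/4 * expectation (\<lambda>w. (born a w)\<^sup>2 * G w) + 1/2 * ?Y
      + 1/4 * expectation (\<lambda>w. (born b w)\<^sup>2 * G w) - ?Y / 2"
    by (simp only: expectation_linear G expectation_coh_re_sq[OF ab G G_phase])
  finally show ?thesis by simp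
qed

lemma expectation_born4_hadamard:
  assumes ab: "a \<noteq> b"
  shows "expectation (\<lambda>w. born a w ^ 4) =
    1/16 * expectation (\<lambda>w. (born a w + born b w) ^ 4)
    + 3/4 * expectation (\<lambda>w. born a w * born b w * (born a w + born b w)\<^sup>2)
    + 3/8 * expectation (\<lambda>w. (born a w)\<^sup>2 * (born b w)\<^sup>2)"
proof -
  let ?t = "\<lambda>w. born a w + born b w" and ?r = "coh_re a b"
  have t_flip: "?t (phase_gate a b z *v w) = ?t w" if "cmod z = 1" for z w
    using ab that by (simp add: born_phase_gate)
  have "expectation (\<lambda>w. born a w ^ 4) = expectation (\<lambda>w. born a (hadamard_gate a b *v w) ^ 4)"
    using ab by (intro expectation_unitary[symmetric] hadamard_gate_unitary continuous_intros)
  also have "\<dots> = expectation (\<lambda>w. 1/16 * ?t w ^ 4 + 1/2 * (?r w * ?t w ^ 3)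
      + 3/2 * ((?r w)\<^sup>2 * (?t w)\<^sup>2) + 2 * (?r w ^ 3 * ?t w) + ?r w ^ 4)"
    by (rule Bochner_Integration.integral_cong[OF refl])
      (use ab in \<open>simp add: born_hadamard_gate power2_eq_square power3_eq_cube power4_eq_xxxx field_simps\<close>)
  also have "\<dots> = 1/16 * expectation (\<lambda>w. ?t w ^ 4) + 1/2 * expectation (\<lambda>w. ?r w * ?t w ^ 3)
      + 3/2 * expectation (\<lambda>w. (?r w)\<^sup>2 * (?t w)\<^sup>2) + 2 * expectation (\<lambda>w. ?r w ^ 3 * ?t w)
      + expectation (\<lambda>w. ?r w ^ 4)"
    by (simp only: expectation_linear)
  also have "\<dots> = 1/16 * expectation (\<lambda>w. ?t w ^ 4)
      + 3/2 * (expectation (\<lambda>w. born a w * born b w * (?t w)\<^sup>2) / 2)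
      + 3/8 * expectation (\<lambda>w. (born a w)\<^sup>2 * (born b w)\<^sup>2)"
    using ab t_flip
    by (simp add: expectation_coh_re_odd expectation_coh_re_sq expectation_coh_re4 continuous_intros)
  finally show ?thesis by simp
qed

lemma expectation_born_swap:
  fixes f :: "real \<Rightarrow> real \<Rightarrow> real"
  assumes "a \<noteq> b" and "\<And>x y. continuous_on UNIV (\<lambda>w :: 'n qvec. f (born x w) (born y w))"
  shows "expectation (\<lambda>w. f (born a w) (born b w)) = expectation (\<lambda>w. f (born b w) (born a w))"
proof -
  have "expectation (\<lambda>w. f (born b (swap_gate a b *v w)) (born a (swap_gate a b *v w)))
      = expectation (\<lambda>w. f (born b w) (born a w))"
    using assms by (intro expectation_unitary swap_gate_unitary)
  then show ?thesis
    using assms(1) by (simp add: born_swap_gate)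
qed

lemma expectation_born_binomial:
  "expectation (\<lambda>w. (born a w + born b w) ^ 4) = expectation (\<lambda>w. born a w ^ 4)
    + 4 * expectation (\<lambda>w. born a w ^ 3 * born b w) + 6 * expectation (\<lambda>w. (born a w)\<^sup>2 * (born b w)\<^sup>2)
    + 4 * expectation (\<lambda>w. born a w * born b w ^ 3) + expectation (\<lambda>w. born b w ^ 4)"
  "expectation (\<lambda>w. born a w * born b w * (born a w + born b w)\<^sup>2) =
    expectation (\<lambda>w. born a w ^ 3 * born b w) + 2 * expectation (\<lambda>w. (born a w)\<^sup>2 * (born b w)\<^sup>2)
    + expectation (\<lambda>w. born a w * born b w ^ 3)"
  "expectation (\<lambda>w. (born a w)\<^sup>2 * (born a w + born b w)\<^sup>2) = expectation (\<lambda>w. born a w ^ 4)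
    + 2 * expectation (\<lambda>w. born a w ^ 3 * born b w) + expectation (\<lambda>w. (born a w)\<^sup>2 * (born b w)\<^sup>2)"
proof -
  have "(x + y) ^ 4 = x ^ 4 + 4 * (x ^ 3 * y) + 6 * (x\<^sup>2 * y\<^sup>2) + 4 * (x * y ^ 3) + y ^ 4"
    and "x * y * (x + y)\<^sup>2 = x ^ 3 * y + 2 * (x\<^sup>2 * y\<^sup>2) + x * y ^ 3"
    and "x\<^sup>2 * (x + y)\<^sup>2 = x ^ 4 + 2 * (x ^ 3 * y) + x\<^sup>2 * y\<^sup>2" for x y :: real
    by algebra+
  then show "expectation (\<lambda>w. (born a w + born b w) ^ 4) = expectation (\<lambda>w. born a w ^ 4)
    + 4 * expectation (\<lambda>w. born a w ^ 3 * born b w) + 6 * expectation (\<lambda>w. (born a w)\<^sup>2 * (born b w)\<^sup>2)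
    + 4 * expectation (\<lambda>w. born a w * born b w ^ 3) + expectation (\<lambda>w. born b w ^ 4)"
    and "expectation (\<lambda>w. born a w * born b w * (born a w + born b w)\<^sup>2) =
    expectation (\<lambda>w. born a w ^ 3 * born b w) + 2 * expectation (\<lambda>w. (born a w)\<^sup>2 * (born b w)\<^sup>2)
    + expectation (\<lambda>w. born a w * born b w ^ 3)"
    and "expectation (\<lambda>w. (born a w)\<^sup>2 * (born a w + born b w)\<^sup>2) = expectation (\<lambda>w. born a w ^ 4)
    + 2 * expectation (\<lambda>w. born a w ^ 3 * born b w) + expectation (\<lambda>w. (born a w)\<^sup>2 * (born b w)\<^sup>2)"
    by (simp_all only: expectation_linear)
qed

lemma expectation_born_pair:
  assumes ab: "a \<noteq> b"
  shows "expectation (\<lambda>w. born a w ^ 3 * born b w) = expectation (\<lambda>w. born a w ^ 4) / 4"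
    and "expectation (\<lambda>w. (born a w)\<^sup>2 * (born b w)\<^sup>2) = expectation (\<lambda>w. born a w ^ 4) / 6"
proof -
  let ?A4 = "expectation (\<lambda>w. born a w ^ 4)"
  let ?A31 = "expectation (\<lambda>w. born a w ^ 3 * born b w)"
  let ?A22 = "expectation (\<lambda>w. (born a w)\<^sup>2 * (born b w)\<^sup>2)"
  have swap: "expectation (\<lambda>w. born b w ^ 4) = ?A4"
    "expectation (\<lambda>w. born a w * born b w ^ 3) = ?A31"
    "expectation (\<lambda>w. (born b w)\<^sup>2 * (born a w + born b w)\<^sup>2) =
      expectation (\<lambda>w. (born a w)\<^sup>2 * (born a w + born b w)\<^sup>2)"
    using expectation_born_swap[OF ab, of "\<lambda>x y. x ^ 4"]
      expectation_born_swap[OF ab, of "\<lambda>x y. x ^ 3 * y"]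
      expectation_born_swap[OF ab, of "\<lambda>x y. y\<^sup>2 * (x + y)\<^sup>2"]
    by (simp_all add: continuous_intros mult.commute add.commute)
  have "?A31 + 2 * ?A22 + ?A31 = (?A4 + 2 * ?A31 + ?A22) / 2"
    using expectation_born_hadamard[OF ab, of "\<lambda>w. (born a w + born b w)\<^sup>2"] ab
    by (simp add: born_hadamard_gate born_phase_gate continuous_intros expectation_born_binomial swap)
  moreover have "?A4 = 1/16 * (?A4 + 4 * ?A31 + 6 * ?A22 + 4 * ?A31 + ?A4)
      + 3/4 * (?A31 + 2 * ?A22 + ?A31) + 3/8 * ?A22"
    using expectation_born4_hadamard[OF ab] by (simp add: expectation_born_binomial swap)
  ultimately show "?A31 = ?A4 / 4" "?A22 = ?A4 / 6"
    by (simp_all add: field_simps)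
qed

definition moment4 :: real where
  "moment4 = expectation (\<lambda>w. born (\<lambda>_. False) w ^ 4) / 24"

lemma expectation_born4: "expectation (\<lambda>w. born a w ^ 4) = 24 * moment4"
  using expectation_born_swap[of a "\<lambda>_. False" "\<lambda>x y. x ^ 4"]
  by (cases "a = (\<lambda>_. False)") (auto simp: moment4_def continuous_intros)

lemma expectation_born31: "a \<noteq> b \<Longrightarrow> expectation (\<lambda>w. born a w ^ 3 * born b w) = 6 * moment4"
  using expectation_born_pair(1) by (simp add: expectation_born4)

lemma expectation_born22: "a \<noteq> b \<Longrightarrow> expectation (\<lambda>w. (born a w)\<^sup>2 * (born b w)\<^sup>2) = 4 * moment4"
  using expectation_born_pair(2) by (simp add: expectation_born4)

lemma expectation_born211:
  assumes "a \<noteq> b" "a \<noteq> c" "b \<noteq> c"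
  shows "expectation (\<lambda>w. born a w * born b w * (born c w)\<^sup>2) = 2 * moment4"
proof -
  have "expectation (\<lambda>w. born a w * born b w * (born c w)\<^sup>2) =
      (expectation (\<lambda>w. (born a w)\<^sup>2 * (born c w)\<^sup>2) + expectation (\<lambda>w. (born b w)\<^sup>2 * (born c w)\<^sup>2)) / 4"
    using assms
    by (intro expectation_born_hadamard continuous_intros) (auto simp: born_hadamard_gate born_phase_gate)
  then show ?thesis
    using assms by (simp add: expectation_born22)
qed

lemma expectation_born1111:
  assumes "a \<noteq> b" "a \<noteq> c" "a \<noteq> e" "b \<noteq> c" "b \<noteq> e" "c \<noteq> e"
  shows "expectation (\<lambda>w. born a w * born b w * (born c w * born e w)) = moment4"
proof -
  have "expectation (\<lambda>w. born a w * born b w * (born c w * born e w)) =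
      (expectation (\<lambda>w. born c w * born e w * (born a w)\<^sup>2)
      + expectation (\<lambda>w. born c w * born e w * (born b w)\<^sup>2)) / 4"
    using assms
    by (subst expectation_born_hadamard) (auto simp: born_hadamard_gate born_phase_gate mult_ac
        intro: continuous_intros)
  then show ?thesis
    using assms by (simp add: expectation_born211)
qed

end

text \<open>The product of the factorials of the multiplicities of the entries of \<open>(a, b, c, e)\<close>, i.e.
  the number of permutations of the four positions that fix the tuple.\<close>
definition tuple_symmetry :: "'a \<Rightarrow> 'a \<Rightarrow> 'a \<Rightarrow> 'a \<Rightarrow> real" where
  "tuple_symmetry a b c e = (1 + of_bool (b = a)) * (1 + of_bool (c = a) + of_bool (c = b))
     * (1 + of_bool (e = a) + of_bool (e = b) + of_bool (e = c))"

lemma sum_tuple_symmetry_inner: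
  fixes f :: "'a::finite \<Rightarrow> real"
  defines "p k \<equiv> \<Sum>x\<in>UNIV. f x ^ k"
  shows "(\<Sum>c\<in>UNIV. f c * (1 + of_bool (c = a) + of_bool (c = b)) *
      (\<Sum>e\<in>UNIV. f e * (1 + of_bool (e = a) + of_bool (e = b) + of_bool (e = c))))
    = ((p 1)\<^sup>2 + p 2 + 2 * p 1 * f a + 2 * (f a)\<^sup>2) + (2 * p 1 + 2 * f a) * f b + 2 * (f b)\<^sup>2"
proof -
  have "(\<Sum>e\<in>UNIV. f e * (1 + of_bool (e = a) + of_bool (e = b) + of_bool (e = c))) = p 1 + f a + f b + f c"
    for c by (simp add: p_def distrib_left sum.distrib)
  moreover have "f c * (1 + of_bool (c = a) + of_bool (c = b)) * (p 1 + f a + f b + f c)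
      = (p 1 + f a + f b) * f c + (f c)\<^sup>2 + ((p 1 + f a + f b) * f c + (f c)\<^sup>2) * of_bool (c = a)
        + ((p 1 + f a + f b) * f c + (f c)\<^sup>2) * of_bool (c = b)" for c
    by (simp add: algebra_simps power2_eq_square)
  ultimately have "(\<Sum>c\<in>UNIV. f c * (1 + of_bool (c = a) + of_bool (c = b)) *
      (\<Sum>e\<in>UNIV. f e * (1 + of_bool (e = a) + of_bool (e = b) + of_bool (e = c))))
    = (p 1 + f a + f b) * p 1 + p 2 + ((p 1 + f a + f b) * f a + (f a)\<^sup>2) + ((p 1 + f a + f b) * f b + (f b)\<^sup>2)"
    by (simp add: sum.distrib p_def flip: sum_distrib_left)
  then show ?thesis
    by (simp add: algebra_simps power2_eq_square)
qed

lemma sum_tuple_symmetry: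
  fixes f :: "'a::finite \<Rightarrow> real"
  defines "p k \<equiv> \<Sum>x\<in>UNIV. f x ^ k"
  shows "(\<Sum>a\<in>UNIV. \<Sum>b\<in>UNIV. \<Sum>c\<in>UNIV. \<Sum>e\<in>UNIV. f a * f b * f c * f e * tuple_symmetry a b c e)
    = (p 1) ^ 4 + 6 * (p 1)\<^sup>2 * p 2 + 3 * (p 2)\<^sup>2 + 8 * p 1 * p 3 + 6 * p 4"
proof -
  define \<alpha> \<beta> where "\<alpha> a = (p 1)\<^sup>2 + p 2 + 2 * p 1 * f a + 2 * (f a)\<^sup>2" and "\<beta> a = 2 * p 1 + 2 * f a" for a
  have "(\<Sum>a\<in>UNIV. \<Sum>b\<in>UNIV. \<Sum>c\<in>UNIV. \<Sum>e\<in>UNIV. f a * f b * f c * f e * tuple_symmetry a b c e)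
    = (\<Sum>a\<in>UNIV. f a * (\<Sum>b\<in>UNIV. f b * (1 + of_bool (b = a)) * (\<Sum>c\<in>UNIV. f c * (1 + of_bool (c = a) + of_bool (c = b)) *
        (\<Sum>e\<in>UNIV. f e * (1 + of_bool (e = a) + of_bool (e = b) + of_bool (e = c))))))"
    by (simp add: tuple_symmetry_def sum_distrib_left mult_ac)
  also have "\<dots> = (\<Sum>a\<in>UNIV. f a * (\<Sum>b\<in>UNIV. (\<alpha> a * f b + \<beta> a * (f b)\<^sup>2 + 2 * f b ^ 3) * (1 + of_bool (b = a))))"
    unfolding sum_tuple_symmetry_inner[of f, folded p_def] \<alpha>_def \<beta>_def
    by (simp add: algebra_simps power2_eq_square power3_eq_cube)
  also have "\<dots> = (\<Sum>a\<in>UNIV. f a * (\<alpha> a * p 1 + \<beta> a * p 2 + 2 * p 3 + (\<alpha> a * f a + \<beta> a * (f a)\<^sup>2 + 2 * f a ^ 3)))"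
    by (simp add: distrib_left sum.distrib p_def flip: sum_distrib_left)
  also have "\<dots> = (\<Sum>a\<in>UNIV. (p 1 ^ 3 + 3 * p 1 * p 2 + 2 * p 3) * f a + (3 * (p 1)\<^sup>2 + 3 * p 2) * (f a)\<^sup>2
      + 6 * p 1 * f a ^ 3 + 6 * f a ^ 4)"
    by (intro sum.cong) (simp_all add: \<alpha>_def \<beta>_def algebra_simps power2_eq_square power3_eq_cube power4_eq_xxxx)
  also have "\<dots> = (p 1) ^ 4 + 6 * (p 1)\<^sup>2 * p 2 + 3 * (p 2)\<^sup>2 + 8 * p 1 * p 3 + 6 * p 4"
    by (simp add: sum.distrib p_def flip: sum_distrib_left) algebra
  finally show ?thesis .
qed

context unitarily_invariant
begin

lemma expectation_born_product:
  "expectation (\<lambda>w. born a w * born b w * born c w * born e w) = moment4 * tuple_symmetry a b c e"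
proof -
  have reorder: "expectation (\<lambda>w. born x1 w * born x2 w * born x3 w * born x4 w) = expectation F"
    if "\<And>w. born x1 w * born x2 w * born x3 w * born x4 w = F w" for x1 x2 x3 x4 F
    using that by simp
  note powers = power2_eq_square power3_eq_cube power4_eq_xxxx mult_ac
  have 4: "expectation (\<lambda>w. born x w * born x w * born x w * born x w) = 24 * moment4" for x
    by (subst reorder[of x x x x "\<lambda>w. born x w ^ 4"], simp add: powers, simp add: expectation_born4)
  have 31: "expectation (\<lambda>w. born x w * born x w * born x w * born y w) = 6 * moment4"
    "expectation (\<lambda>w. born x w * born x w * born y w * born x w) = 6 * moment4"
    "expectation (\<lambda>w. born x w * born y w * born x w * born x w) = 6 * moment4"
    "expectation (\<lambda>w. born y w * born x w * born x w * born x w) = 6 * moment4"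
    if "x \<noteq> y" for x y
    using that by (subst reorder[of _ _ _ _ "\<lambda>w. born x w ^ 3 * born y w"], simp add: powers,
        simp add: expectation_born31)+
  have 22: "expectation (\<lambda>w. born x w * born x w * born y w * born y w) = 4 * moment4"
    "expectation (\<lambda>w. born x w * born y w * born x w * born y w) = 4 * moment4"
    "expectation (\<lambda>w. born x w * born y w * born y w * born x w) = 4 * moment4"
    if "x \<noteq> y" for x y
    using that by (subst reorder[of _ _ _ _ "\<lambda>w. (born x w)\<^sup>2 * (born y w)\<^sup>2"], simp add: powers,
        simp add: expectation_born22)+
  have 211: "expectation (\<lambda>w. born x w * born x w * born y w * born z w) = 2 * moment4"
    "expectation (\<lambda>w. born x w * born y w * born x w * born z w) = 2 * moment4"
    "expectation (\<lambda>w. born x w * born y w * born z w * born x w) = 2 * moment4"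
    "expectation (\<lambda>w. born y w * born x w * born x w * born z w) = 2 * moment4"
    "expectation (\<lambda>w. born y w * born x w * born z w * born x w) = 2 * moment4"
    "expectation (\<lambda>w. born y w * born z w * born x w * born x w) = 2 * moment4"
    if "x \<noteq> y" "x \<noteq> z" "y \<noteq> z" for x y z
    using that by (subst reorder[of _ _ _ _ "\<lambda>w. born y w * born z w * (born x w)\<^sup>2"], simp add: powers,
        simp add: expectation_born211)+
  have 1111: "expectation (\<lambda>w. born x w * born y w * born z w * born u w) = moment4"
    if "x \<noteq> y" "x \<noteq> z" "x \<noteq> u" "y \<noteq> z" "y \<noteq> u" "z \<noteq> u" for x y z u
    using that by (subst reorder[of _ _ _ _ "\<lambda>w. born x w * born y w * (born z w * born u w)"],
        simp add: powers, simp add: expectation_born1111)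
  show ?thesis
    by (cases "b = a"; cases "c = a"; cases "c = b"; cases "e = a"; cases "e = b"; cases "e = c")
      (simp_all add: tuple_symmetry_def 4 31 22 211 1111)
qed

lemma expectation_born_combination4:
  fixes g :: "('n \<Rightarrow> bool) \<Rightarrow> real"
  defines "p k \<equiv> \<Sum>x\<in>UNIV. g x ^ k"
  shows "expectation (\<lambda>w. (\<Sum>x\<in>UNIV. g x * born x w) ^ 4) =
    moment4 * ((p 1) ^ 4 + 6 * (p 1)\<^sup>2 * p 2 + 3 * (p 2)\<^sup>2 + 8 * p 1 * p 3 + 6 * p 4)"
proof -
  have "expectation (\<lambda>w. (\<Sum>x\<in>UNIV. g x * born x w) ^ 4) =
      expectation (\<lambda>w. \<Sum>a\<in>UNIV. \<Sum>b\<in>UNIV. \<Sum>c\<in>UNIV. \<Sum>e\<in>UNIV.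
        (g a * g b * g c * g e) * (born a w * born b w * born c w * born e w))"
    by (simp add: power4_eq_xxxx sum_distrib_left sum_distrib_right mult_ac)
  also have "\<dots> = (\<Sum>a\<in>UNIV. \<Sum>b\<in>UNIV. \<Sum>c\<in>UNIV. \<Sum>e\<in>UNIV.
      (g a * g b * g c * g e) * (moment4 * tuple_symmetry a b c e))"
    by (simp add: expectation_sum continuous_intros expectation_born_product)
  also have "\<dots> = moment4 * (\<Sum>a\<in>UNIV. \<Sum>b\<in>UNIV. \<Sum>c\<in>UNIV. \<Sum>e\<in>UNIV.
      g a * g b * g c * g e * tuple_symmetry a b c e)"
    by (simp add: sum_distrib_left mult_ac)
  finally show ?thesis
    unfolding p_def by (simp only: sum_tuple_symmetry)
qed

lemma moment4_eq:
  defines "d \<equiv> real CARD('n \<Rightarrow> bool)"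
  shows "moment4 = 1 / (d * (d + 1) * (d + 2) * (d + 3))"
proof -
  have "expectation (\<lambda>w. (\<Sum>x\<in>UNIV. 1 * born x w) ^ 4) = expectation (\<lambda>w. 1)"
    by (rule expectation_cong_sphere) (simp_all add: continuous_intros sum_born)
  then have "moment4 * (d * (d + 1) * (d + 2) * (d + 3)) = 1"
    using expectation_born_combination4[of "\<lambda>_. 1"]
    by (simp add: d_def prob_space algebra_simps power2_eq_square power4_eq_xxxx)
  moreover have "d * (d + 1) * (d + 2) * (d + 3) \<noteq> 0"
    by (simp add: d_def)
  ultimately show ?thesis
    by (simp add: eq_divide_eq del: mult_eq_0_iff)
qed

end

section \<open>Diagonalising Pauli strings\<close>

definition tensor_prod :: "('n::finite \<Rightarrow> bool \<Rightarrow> bool \<Rightarrow> complex) \<Rightarrow> 'n qmat" where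
  "tensor_prod F = (\<chi> x y. \<Prod>k\<in>UNIV. F k (x k) (y k))"

lemma sum_prod_fun:
  "(\<Sum>z :: 'n::finite \<Rightarrow> 'b::finite \<in> UNIV. \<Prod>k\<in>UNIV. f k (z k)) =
    (\<Prod>k\<in>UNIV. \<Sum>b\<in>UNIV. (f k b :: 'c::comm_semiring_1))"
  by (subst prod_sum_PiE) (auto simp: PiE_UNIV)

lemma tensor_prod_mult: "tensor_prod F ** tensor_prod G = tensor_prod (\<lambda>k i j. \<Sum>l\<in>UNIV. F k i l * G k l j)"
proof -
  have "(\<Sum>z\<in>UNIV. (\<Prod>k\<in>UNIV. F k (x k) (z k)) * (\<Prod>k\<in>UNIV. G k (z k) (y k)))
      = (\<Prod>k\<in>UNIV. \<Sum>l\<in>UNIV. F k (x k) l * G k l (y k))" for x y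
    using sum_prod_fun[where f = "\<lambda>k l. F k (x k) l * G k l (y k)"] by (simp flip: prod.distrib)
  then show ?thesis
    by (simp add: vec_eq_iff tensor_prod_def matrix_matrix_mult_def)
qed

lemma adj_tensor_prod: "adj (tensor_prod F) = tensor_prod (\<lambda>k i j. cnj (F k j i))"
  by (simp add: vec_eq_iff tensor_prod_def adj_def cnj_prod)

lemma tensor_prod_id: "tensor_prod (\<lambda>k i j. of_bool (i = j)) = (mat 1 :: 'n::finite qmat)"
proof -
  have "(\<Prod>k\<in>UNIV. of_bool (x k = y k) :: complex) = of_bool (x = y)" for x y :: "'n \<Rightarrow> bool"
    by (cases "x = y") (auto simp: fun_eq_iff)
  then show ?thesis
    by (simp add: vec_eq_iff tensor_prod_def mat_def)
qed

lemma pauli_string_eq_tensor_prod: "pauli_string ps = tensor_prod (\<lambda>k. pauli_entry (ps k))"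
  by (simp add: pauli_string_def tensor_prod_def)

lemma pauli_string_PI: "pauli_string (\<lambda>_. PI) = (mat 1 :: 'n::finite qmat)"
proof -
  have "pauli_entry PI = (\<lambda>i j. of_bool (i = j))"
    by (simp add: fun_eq_iff)
  then show ?thesis
    by (simp add: pauli_string_eq_tensor_prod tensor_prod_id)
qed

text \<open>The columns of \<open>pauli_eigenbasis p\<close> are eigenvectors of the Pauli matrix \<open>p\<close>, ordered so
  that conjugation turns \<open>p\<close> into \<open>pauli_diag p\<close>, i.e. into \<open>I\<close> or \<open>Z\<close>.\<close>
definition pauli_eigenbasis :: "pauli \<Rightarrow> bool \<Rightarrow> bool \<Rightarrow> complex" where
  "pauli_eigenbasis p i j = (case p of
      PX \<Rightarrow> inv_sqrt2 * (if i \<and> j then -1 else 1)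
    | PY \<Rightarrow> inv_sqrt2 * (if i then (if j then - \<i> else \<i>) else 1)
    | _ \<Rightarrow> of_bool (i = j))"

definition pauli_diag :: "pauli \<Rightarrow> pauli" where
  "pauli_diag p = (if p = PI then PI else PZ)"

lemma pauli_eigenbasis_unitary:
  "(\<Sum>l\<in>UNIV. pauli_eigenbasis p i l * cnj (pauli_eigenbasis p j l)) = of_bool (i = j)"
  "(\<Sum>l\<in>UNIV. cnj (pauli_eigenbasis p l i) * pauli_eigenbasis p l j) = of_bool (i = j)"
  by (cases p; cases i; cases j; simp add: UNIV_bool pauli_eigenbasis_def algebra_simps; simp add: mult.assoc[symmetric])+

lemma pauli_eigenbasis_diagonalizes:
  "(\<Sum>m\<in>UNIV. (\<Sum>l\<in>UNIV. cnj (pauli_eigenbasis p l i) * pauli_entry p l m) * pauli_eigenbasis p m j) =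
    pauli_entry (pauli_diag p) i j"
  by (cases p; cases i; cases j; simp add: UNIV_bool pauli_eigenbasis_def pauli_diag_def algebra_simps;
      simp add: mult.assoc[symmetric])

definition pauli_diagonalizer :: "('n::finite \<Rightarrow> pauli) \<Rightarrow> 'n qmat" where
  "pauli_diagonalizer ps = tensor_prod (\<lambda>k. pauli_eigenbasis (ps k))"

lemma pauli_diagonalizer_unitary: "pauli_diagonalizer ps \<in> unitary_group"
  by (simp add: unitary_group_def pauli_diagonalizer_def adj_tensor_prod tensor_prod_mult
      pauli_eigenbasis_unitary tensor_prod_id)

lemma pauli_diagonalizer_conj:
  "adj (pauli_diagonalizer ps) ** pauli_string ps ** pauli_diagonalizer ps = pauli_string (pauli_diag \<circ> ps)"
  by (simp add: pauli_diagonalizer_def pauli_string_eq_tensor_prod adj_tensor_prod tensor_prod_mult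
      pauli_eigenbasis_diagonalizes)

definition pauli_eigenvalue :: "('n::finite \<Rightarrow> pauli) \<Rightarrow> ('n \<Rightarrow> bool) \<Rightarrow> real" where
  "pauli_eigenvalue ps x = (\<Prod>k\<in>UNIV. if ps k = PI then 1 else if x k then -1 else 1)"

lemma pauli_string_diag:
  "pauli_string (pauli_diag \<circ> ps) $ x $ y = of_bool (x = y) * of_real (pauli_eigenvalue ps x)"
proof (cases "x = y")
  case True
  have "pauli_entry (pauli_diag p) b b = of_real (if p = PI then 1 else if b then -1 else 1)" for p b
    by (simp add: pauli_diag_def)
  with True show ?thesis
    by (simp add: pauli_string_def pauli_eigenvalue_def of_real_prod)
next
  case False
  then obtain k where "x k \<noteq> y k" by auto
  then show ?thesis
    by (auto simp: pauli_string_def pauli_diag_def intro!: prod_zero bexI[of _ k])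
qed

lemma qform_pauli_diagonalizer:
  "qform (pauli_string ps) (pauli_diagonalizer ps *v w) = of_real (\<Sum>x\<in>UNIV. pauli_eigenvalue ps x * born x w)"
proof -
  have "qform (pauli_string (pauli_diag \<circ> ps)) w = (\<Sum>x\<in>UNIV. cnj (w $ x) * (of_real (pauli_eigenvalue ps x) * w $ x))"
    by (simp add: qform_def matrix_vector_mult_def pauli_string_diag mult.assoc)
  also have "\<dots> = of_real (\<Sum>x\<in>UNIV. pauli_eigenvalue ps x * born x w)"
    unfolding of_real_sum born_def
    by (intro sum.cong) (simp_all add: mult.commute mult.left_commute complex_mult_cnj cmod_power2
        flip: of_real_power)
  finally show ?thesis
    by (simp add: qform_matrix_vector_mult pauli_diagonalizer_conj)
qed

lemma pauli_eigenvalue_sq: "(pauli_eigenvalue ps x)\<^sup>2 = 1"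
  unfolding pauli_eigenvalue_def prod_power_distrib by (rule prod.neutral) simp

lemma sum_pauli_eigenvalue:
  fixes ps :: "'n::finite \<Rightarrow> pauli"
  shows "(\<Sum>x\<in>UNIV. pauli_eigenvalue ps x) = (if ps = (\<lambda>_. PI) then real CARD('n \<Rightarrow> bool) else 0)"
proof -
  have "(\<Sum>x\<in>UNIV. pauli_eigenvalue ps x) =
      (\<Prod>k\<in>UNIV. \<Sum>b\<in>UNIV. if ps k = PI then 1 else if b then -1 else 1 :: real)"
    unfolding pauli_eigenvalue_def by (rule sum_prod_fun)
  also have "\<dots> = (\<Prod>k\<in>UNIV. if ps k = PI then 2 else 0)"
    by (intro prod.cong) (auto simp: UNIV_bool)
  finally show ?thesis
    by (auto simp: card_fun fun_eq_iff prod_zero)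
qed

section \<open>Pauli fourth moments of a random state\<close>

context unitarily_invariant
begin

lemma expectation_pauli4:
  defines "d \<equiv> real CARD('n \<Rightarrow> bool)"
  shows "expectation (\<lambda>w. Re (qform (pauli_string ps) w) ^ 4) =
    (if ps = (\<lambda>_. PI) then 1 else 3 / ((d + 1) * (d + 3)))"
proof -
  have powers: "pauli_eigenvalue ps x ^ 3 = pauli_eigenvalue ps x" "pauli_eigenvalue ps x ^ 4 = 1" for x
    using pauli_eigenvalue_sq[of ps x] by (simp_all add: power3_eq_cube power4_eq_xxxx power2_eq_square)
  have "expectation (\<lambda>w. Re (qform (pauli_string ps) w) ^ 4) =
      expectation (\<lambda>w. Re (qform (pauli_string ps) (pauli_diagonalizer ps *v w)) ^ 4)"
    by (intro expectation_unitary[symmetric] pauli_diagonalizer_unitary continuous_intros)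
  also have "\<dots> = expectation (\<lambda>w. (\<Sum>x\<in>UNIV. pauli_eigenvalue ps x * born x w) ^ 4)"
    by (simp add: qform_pauli_diagonalizer)
  also have "\<dots> = moment4 * (if ps = (\<lambda>_. PI) then d * (d + 1) * (d + 2) * (d + 3) else 3 * d * (d + 2))"
    unfolding expectation_born_combination4 pauli_eigenvalue_sq powers
    by (simp add: sum_pauli_eigenvalue d_def algebra_simps power2_eq_square power3_eq_cube
        power4_eq_xxxx)
  also have "\<dots> = (if ps = (\<lambda>_. PI) then 1 else 3 / ((d + 1) * (d + 3)))"
  proof -
    have "d > 0" by (simp add: d_def)
    then show ?thesis by (simp add: moment4_eq[folded d_def] divide_simps)
  qed
  finally show ?thesis .
qed

lemma expectation_sum_pauli4:
  defines "d \<equiv> real CARD('n \<Rightarrow> bool)"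
  shows "(\<Sum>ps\<in>UNIV. expectation (\<lambda>w. Re (qform (pauli_string ps) w) ^ 4)) = 4 * d / (d + 3)"
proof -
  define c where "c = 3 / ((d + 1) * (d + 3))"
  have "(\<Sum>ps\<in>UNIV. expectation (\<lambda>w. Re (qform (pauli_string ps) w) ^ 4))
      = (\<Sum>ps :: 'n \<Rightarrow> pauli \<in> UNIV. c + (if ps = (\<lambda>_. PI) then 1 - c else 0))"
    by (intro sum.cong) (auto simp: expectation_pauli4 c_def d_def)
  also have "\<dots> = real CARD('n \<Rightarrow> pauli) * c + (1 - c)"
    by (simp add: sum.distrib)
  also have "real CARD('n \<Rightarrow> pauli) = d\<^sup>2"
    by (simp add: d_def card_fun UNIV_pauli power2_eq_square flip: power_mult_distrib)
  also have "d\<^sup>2 * c + (1 - c) = 4 * d / (d + 3)"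
  proof -
    have "d > 0" by (simp add: d_def)
    then show ?thesis by (simp add: c_def divide_simps) algebra
  qed
  finally show ?thesis .
qed

end

definition pauli_purity :: "'n::finite qvec \<Rightarrow> real" where
  "pauli_purity w = (1 / real (qdim TYPE('n))) * (\<Sum>s\<in>UNIV. Re (qform (pauli_string s) w) ^ 4)"

lemma qdim_eq_card: "qdim TYPE('n::finite) = CARD('n \<Rightarrow> bool)"
  by (simp add: qdim_def card_fun)

lemma Mlin_proj: "Mlin (proj w) = 1 - pauli_purity w"
  by (simp add: Mlin_def pauli_purity_def pauli_exp_def tr_mult_proj)

lemma M2_proj: "M2 (proj w) = - log 2 (pauli_purity w)"
  by (simp add: M2_def pauli_purity_def pauli_exp_def tr_mult_proj)

lemma continuous_on_pauli_purity [continuous_intros]: "continuous_on A pauli_purity"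
  unfolding pauli_purity_def by (intro continuous_intros)

lemma pauli_purity_ge:
  fixes w :: "'n::finite qvec"
  assumes "norm w = 1"
  shows "pauli_purity w \<ge> 1 / real CARD('n \<Rightarrow> bool)"
proof -
  have "1 = Re (qform (pauli_string (\<lambda>_. PI)) w) ^ 4"
    using assms by (simp add: pauli_string_PI qform_one)
  also have "\<dots> \<le> (\<Sum>s\<in>UNIV. Re (qform (pauli_string s) w) ^ 4)"
    by (rule member_le_sum) auto
  finally show ?thesis
    by (simp add: pauli_purity_def qdim_eq_card divide_right_mono)
qed

lemma pauli_purity_pos: "norm w = 1 \<Longrightarrow> pauli_purity w > 0"
  by (rule less_le_trans[OF _ pauli_purity_ge]) simp_all

context unitarily_invariant
begin

lemma expectation_pauli_purity:
  "expectation pauli_purity = 4 / (real CARD('n \<Rightarrow> bool) + 3)"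
  unfolding pauli_purity_def qdim_eq_card
  by (subst integral_mult_right_zero, subst expectation_sum)
    (auto simp: expectation_sum_pauli4 intro!: continuous_intros)

lemma integrable_neg_log_pauli_purity: "integrable \<nu> (\<lambda>w. - log 2 (pauli_purity w))"
proof (rule integrable_continuous_on_sphere)
  show "(\<lambda>w. - log 2 (pauli_purity w)) \<in> borel_measurable \<nu>"
    using measurable_continuous[OF continuous_on_pauli_purity] by measurable
  have "\<forall>w\<in>sphere 0 1. pauli_purity w \<noteq> 0"
    using pauli_purity_pos by force
  then show "continuous_on (sphere 0 1) (\<lambda>w. - log 2 (pauli_purity w))"
    by (intro continuous_intros) auto
qed

lemma expectation_neg_log_pauli_purity:
  "- log 2 (4 / (real CARD('n \<Rightarrow> bool) + 3)) \<le> expectation (\<lambda>w. - log 2 (pauli_purity w))"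
proof -
  have "- log 2 (expectation pauli_purity) \<le> expectation (\<lambda>w. - log 2 (pauli_purity w))"
  proof (rule jensens_inequality[where I = "{0<..}"])
    show "AE w in \<nu>. pauli_purity w \<in> {0<..}"
      using AE_norm_eq_1 by eventually_elim (simp add: pauli_purity_pos)
    show "convex_on {0<..} (\<lambda>x. - log 2 x)"
      by (rule minus_log_convex) simp
    show "integrable \<nu> (\<lambda>w. - log 2 (pauli_purity w))"
      by (rule integrable_neg_log_pauli_purity)
  qed (auto intro: integrable_continuous continuous_intros)
  then show ?thesis
    by (simp add: expectation_pauli_purity)
qed

end

lemma haar_measurable_continuous:
  assumes "haar_unitary \<mu>" and "continuous_on UNIV f"
  shows "f \<in> borel_measurable \<mu>"
proof -
  have "sets \<mu> = sets borel"
    using assms(1) by (simp add: haar_unitary_def)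
  with assms(2) show ?thesis
    by (simp add: measurable_cong_sets[OF \<open>sets \<mu> = sets borel\<close> refl] borel_measurable_continuous_onI)
qed

lemma unitarily_invariant_haar_state:
  fixes \<mu> :: "'n::finite qmat measure"
  assumes haar: "haar_unitary \<mu>" and \<phi>: "norm \<phi> = 1"
  shows "unitarily_invariant (distr \<mu> borel (\<lambda>U. U *v \<phi>))"
proof -
  interpret prob_space \<mu>
    using haar by (simp add: haar_unitary_def)
  have meas: "(\<lambda>U. U *v \<phi>) \<in> borel_measurable \<mu>"
    using haar by (intro haar_measurable_continuous continuous_intros)
  have "emeasure \<mu> unitary_group = 1"
    using haar by (simp add: haar_unitary_def)
  moreover from this have "unitary_group \<in> events"
    using emeasure_notin_sets by fastforce
  ultimately have "AE U in \<mu>. U \<in> unitary_group"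
    by (intro AE_in_set_eq_1[THEN iffD2]) (auto simp: measure_def)
  then have "AE U in \<mu>. norm (U *v \<phi>) = 1"
    by eventually_elim (simp add: norm_unitary_mult \<phi>)
  moreover have "distr (distr \<mu> borel (\<lambda>U. U *v \<phi>)) borel (\<lambda>w. V *v w) = distr \<mu> borel (\<lambda>U. U *v \<phi>)"
    if V: "V \<in> unitary_group" for V
  proof -
    have "(\<lambda>U. V ** U) \<in> borel_measurable \<mu>"
      using haar by (intro haar_measurable_continuous continuous_intros)
    moreover have "(\<lambda>w. V *v w) \<in> borel_measurable borel"
      and "(\<lambda>U :: 'n qmat. U *v \<phi>) \<in> borel_measurable borel"
      by (simp_all add: borel_measurable_continuous_onI continuous_on_matrix_vector_mult
          continuous_on_matrix_vector_mult_right)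
    moreover have "(\<lambda>w. V *v w) \<circ> (\<lambda>U. U *v \<phi>) = (\<lambda>U. U *v \<phi>) \<circ> (\<lambda>U. V ** U)"
      by (simp add: comp_def matrix_vector_mul_assoc)
    ultimately have "distr (distr \<mu> borel (\<lambda>U. U *v \<phi>)) borel (\<lambda>w. V *v w) =
        distr (distr \<mu> borel (\<lambda>U. V ** U)) borel (\<lambda>U. U *v \<phi>)"
      using meas by (simp only: distr_distr)
    also have "\<dots> = distr \<mu> borel (\<lambda>U. U *v \<phi>)"
      using haar V by (simp add: haar_unitary_def)
    finally show ?thesis .
  qed
  ultimately show ?thesis
    using meas
    by (intro unitarily_invariant.intro unitarily_invariant_axioms.intro prob_space_distr)
      (simp_all add: AE_distr_iff)
qed

lemma haar_state_integral:
  fixes f :: "'n::finite qvec \<Rightarrow> real"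
  assumes "haar_unitary \<mu>" and "f \<in> borel_measurable borel"
  shows "integrable \<mu> (\<lambda>U. f (U *v \<phi>)) \<longleftrightarrow> integrable (distr \<mu> borel (\<lambda>U. U *v \<phi>)) f"
    and "(\<integral>U. f (U *v \<phi>) \<partial>\<mu>) = (\<integral>w. f w \<partial>distr \<mu> borel (\<lambda>U. U *v \<phi>))"
proof -
  have "(\<lambda>U. U *v \<phi>) \<in> borel_measurable \<mu>"
    using assms(1) by (intro haar_measurable_continuous continuous_intros)
  then show "integrable \<mu> (\<lambda>U. f (U *v \<phi>)) \<longleftrightarrow> integrable (distr \<mu> borel (\<lambda>U. U *v \<phi>)) f"
    and "(\<integral>U. f (U *v \<phi>) \<partial>\<mu>) = (\<integral>w. f w \<partial>distr \<mu> borel (\<lambda>U. U *v \<phi>))"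
    using assms(2) by (simp_all add: integrable_distr_eq integral_distr)
qed

lemma haar_Mlin:
  fixes \<mu> :: "'n::finite qmat measure"
  assumes "haar_unitary \<mu>" and "norm \<phi> = 1"
  shows "integrable \<mu> (\<lambda>U. Mlin (U ** proj \<phi> ** adj U))"
    and "(\<integral>U. Mlin (U ** proj \<phi> ** adj U) \<partial>\<mu>) = 1 - 4 / (real CARD('n \<Rightarrow> bool) + 3)"
proof -
  interpret unitarily_invariant "distr \<mu> borel (\<lambda>U. U *v \<phi>)"
    using assms by (rule unitarily_invariant_haar_state)
  have f: "(\<lambda>w. 1 - pauli_purity w) \<in> borel_measurable borel"
    by (intro borel_measurable_continuous_onI continuous_intros)
  show "integrable \<mu> (\<lambda>U. Mlin (U ** proj \<phi> ** adj U))"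
    unfolding conj_proj Mlin_proj haar_state_integral[OF assms(1) f]
    by (intro integrable_continuous continuous_intros)
  show "(\<integral>U. Mlin (U ** proj \<phi> ** adj U) \<partial>\<mu>) = 1 - 4 / (real CARD('n \<Rightarrow> bool) + 3)"
    unfolding conj_proj Mlin_proj haar_state_integral[OF assms(1) f]
    using expectation_diff[of "\<lambda>_. 1" pauli_purity] prob_space
    by (simp add: continuous_on_const continuous_on_pauli_purity expectation_pauli_purity)
qed

lemma haar_M2:
  fixes \<mu> :: "'n::finite qmat measure"
  assumes "haar_unitary \<mu>" and "norm \<phi> = 1"
  shows "integrable \<mu> (\<lambda>U. M2 (U ** proj \<phi> ** adj U))"
    and "(\<integral>U. M2 (U ** proj \<phi> ** adj U) \<partial>\<mu>) \<ge> - log 2 (4 / (real CARD('n \<Rightarrow> bool) + 3))"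
proof -
  interpret unitarily_invariant "distr \<mu> borel (\<lambda>U. U *v \<phi>)"
    using assms by (rule unitarily_invariant_haar_state)
  have "pauli_purity \<in> borel_measurable borel"
    by (intro borel_measurable_continuous_onI continuous_intros)
  then have f: "(\<lambda>w. - log 2 (pauli_purity w)) \<in> borel_measurable borel"
    by (intro borel_measurable_uminus borel_measurable_log) auto
  show "integrable \<mu> (\<lambda>U. M2 (U ** proj \<phi> ** adj U))"
    unfolding conj_proj M2_proj haar_state_integral[OF assms(1) f]
    by (rule integrable_neg_log_pauli_purity)
  show "(\<integral>U. M2 (U ** proj \<phi> ** adj U) \<partial>\<mu>) \<ge> - log 2 (4 / (real CARD('n \<Rightarrow> bool) + 3))"
    unfolding conj_proj M2_proj haar_state_integral[OF assms(1) f]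
    by (rule expectation_neg_log_pauli_purity)
qed

section \<open>Stabilizer states\<close>

lemma norm_ket0: "norm (ket0 :: 'n::finite qvec) = 1"
proof -
  have "(norm (ket0 :: 'n qvec))\<^sup>2 = (\<Sum>x :: 'n \<Rightarrow> bool \<in> UNIV. if x = (\<lambda>_. False) then 1 else 0)"
    unfolding power2_norm_vec by (intro sum.cong) (auto simp: ket0_def)
  then show ?thesis
    using power2_eq_iff_nonneg[of "norm (ket0 :: 'n qvec)" 1] by simp
qed

lemma STAB_eq_proj:
  assumes "\<rho> \<in> STAB"
  obtains \<phi> where "norm \<phi> = 1" and "\<rho> = proj \<phi>"
proof -
  obtain C where "C \<in> clifford" and "\<rho> = proj (C *v ket0)"
    using assms by (auto simp: STAB_def)
  moreover from this have "norm (C *v ket0) = 1"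
    by (simp add: clifford_def norm_unitary_mult norm_ket0)
  ultimately show ?thesis
    using that by blast
qed

lemma STAB_nonempty: "(STAB :: 'n::finite qmat set) \<noteq> {}"
proof -
  have "adj (mat 1) = (mat 1 :: 'n::finite qmat)" "cscale 1 A = A" for A :: "'n qmat"
    by (simp_all add: vec_eq_iff adj_def mat_def cscale_def)
  then have "mat 1 \<in> (clifford :: 'n qmat set)"
    by (auto simp: clifford_def unitary_group_def)
  then show ?thesis
    by (auto simp: STAB_def)
qed

definition z_strings :: "('n::finite \<Rightarrow> pauli) set" where
  "z_strings = PiE UNIV (\<lambda>_. {PI, PZ})"

definition z_average :: "(('n::finite \<Rightarrow> pauli) \<Rightarrow> 'n qmat) \<Rightarrow> 'n qmat" where
  "z_average F = (\<chi> i j. (1 / 2 ^ CARD('n)) * (\<Sum>z\<in>z_strings. F z $ i $ j))"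

lemma proj_ket0_eq_z_average: "proj (ket0 :: 'n::finite qvec) = z_average pauli_string"
proof -
  have "(\<Sum>z\<in>z_strings. pauli_string z $ i $ j) = (\<Sum>z\<in>z_strings. \<Prod>k\<in>UNIV. pauli_entry (z k) (i k) (j k))"
    for i j :: "'n \<Rightarrow> bool"
    by (simp add: pauli_string_def)
  also have "\<dots> i j = (\<Prod>k\<in>UNIV. \<Sum>\<sigma>\<in>{PI, PZ}. pauli_entry \<sigma> (i k) (j k))" for i j
    unfolding z_strings_def by (rule prod_sum_PiE[symmetric]) auto
  also have "\<dots> i j = (if i = (\<lambda>_. False) \<and> j = (\<lambda>_. False) then 2 ^ CARD('n) else 0)" for i j
  proof (cases "i = (\<lambda>_. False) \<and> j = (\<lambda>_. False)")
    case False
    then obtain k where "i k \<or> j k"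
      by (auto simp: fun_eq_iff)
    then show ?thesis
      by (auto intro!: prod_zero bexI[of _ k])
  qed simp
  finally show ?thesis
    by (simp add: vec_eq_iff proj_def ket0_def z_average_def)
qed

lemma conj_z_average: "C ** z_average F ** adj C = z_average (\<lambda>z. C ** F z ** adj C)"
  by (simp add: vec_eq_iff matrix_matrix_mult_def z_average_def sum_distrib_left sum_distrib_right
      mult_ac sum.swap[of _ UNIV z_strings])

lemma z_average_restrict: "z_average F = z_average (restrict F z_strings)"
  by (simp add: z_average_def)

definition signed_pauli_strings :: "'n::finite qmat set" where
  "signed_pauli_strings = (\<lambda>(c, s). cscale c (pauli_string s)) ` ({1, -1, \<i>, - \<i>} \<times> UNIV)"

text \<open>Since \<open>|0\<dots>0\<rangle>\<langle>0\<dots>0|\<close> is the average of the Pauli strings over \<open>{I, Z}\<^sup>n\<close>, a stabilizer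
  state \<open>C|0\<dots>0\<rangle>\<close> is determined by the signed Pauli strings \<open>C P C\<^sup>\<dagger>\<close> for these finitely
  many \<open>P\<close>.\<close>
lemma STAB_subset: "(STAB :: 'n::finite qmat set) \<subseteq> z_average ` (z_strings \<rightarrow>\<^sub>E signed_pauli_strings)"
proof
  fix \<rho> :: "'n qmat"
  assume "\<rho> \<in> STAB"
  then obtain C where C: "C \<in> clifford" and \<rho>: "\<rho> = proj (C *v ket0)"
    unfolding STAB_def by blast
  have "C ** pauli_string z ** adj C \<in> signed_pauli_strings" for z :: "'n \<Rightarrow> pauli"
  proof -
    obtain c s where "c \<in> {1, -1, \<i>, - \<i>}" and "C ** pauli_string z ** adj C = cscale c (pauli_string s)"
      using C unfolding clifford_def pauli_group_set_def by blast
    then show ?thesis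
      unfolding signed_pauli_strings_def by force
  qed
  moreover have "\<rho> = z_average (restrict (\<lambda>z. C ** pauli_string z ** adj C) z_strings)"
    by (simp add: \<rho> flip: conj_proj z_average_restrict conj_z_average proj_ket0_eq_z_average)
  ultimately show "\<rho> \<in> z_average ` (z_strings \<rightarrow>\<^sub>E signed_pauli_strings)"
    by auto
qed

lemma finite_STAB: "finite STAB"
  by (rule finite_subset[OF STAB_subset])
    (simp add: z_strings_def signed_pauli_strings_def finite_PiE)

lemma integral_average_eq:
  fixes f :: "'i \<Rightarrow> 'a \<Rightarrow> real"
  assumes "finite I" and "I \<noteq> {}"
    and "\<And>i. i \<in> I \<Longrightarrow> integrable M (f i)" and "\<And>i. i \<in> I \<Longrightarrow> integral\<^sup>L M (f i) = c"
  shows "(\<integral>x. (\<Sum>i\<in>I. f i x) / real (card I) \<partial>M) = c"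
  using assms by (simp add: Bochner_Integration.integral_sum)

lemma integral_average_ge:
  fixes f :: "'i \<Rightarrow> 'a \<Rightarrow> real"
  assumes "finite I" and "I \<noteq> {}"
    and "\<And>i. i \<in> I \<Longrightarrow> integrable M (f i)" and "\<And>i. i \<in> I \<Longrightarrow> integral\<^sup>L M (f i) \<ge> c"
  shows "(\<integral>x. (\<Sum>i\<in>I. f i x) / real (card I) \<partial>M) \<ge> c"
proof -
  have "c * real (card I) \<le> (\<Sum>i\<in>I. integral\<^sup>L M (f i))"
    using sum_mono[of I "\<lambda>_. c"] assms(4) by (simp add: mult.commute)
  moreover have "real (card I) > 0"
    using assms(1,2) by (simp add: card_gt_0_iff)
  ultimately show ?thesis
    using assms(3) by (simp add: Bochner_Integration.integral_sum le_divide_eq)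
qed

theorem mainTheorem9:
  fixes \<mu> :: "'n::finite qmat measure"
  assumes "haar_unitary \<mu>"
  defines "d \<equiv> real (qdim TYPE('n))"
  shows "(\<integral>U. NSlin U \<partial>\<mu>) = 1 - 4 / (d + 3)
    \<and> (\<integral>U. NS2 U \<partial>\<mu>) \<ge> - log 2 (1 - (\<integral>U. NSlin U \<partial>\<mu>))
    \<and> - log 2 (1 - (\<integral>U. NSlin U \<partial>\<mu>)) = log 2 ((d + 3) / 4)"
proof -
  have d: "d = real CARD('n \<Rightarrow> bool)"
    by (simp add: d_def qdim_eq_card)
  have lin: "(\<integral>U. NSlin U \<partial>\<mu>) = 1 - 4 / (d + 3)"
    unfolding NSlin_def d using finite_STAB STAB_nonempty
    by (rule integral_average_eq) (auto elim: STAB_eq_proj simp: haar_Mlin[OF assms(1)])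
  moreover have "(\<integral>U. NS2 U \<partial>\<mu>) \<ge> - log 2 (4 / (d + 3))"
    unfolding NS2_def d using finite_STAB STAB_nonempty
    by (rule integral_average_ge) (auto elim: STAB_eq_proj simp: haar_M2[OF assms(1)])
  moreover have "- log 2 (4 / (d + 3)) = log 2 ((d + 3) / 4)"
    using d by (simp add: log_divide)
  ultimately show ?thesis
    by simp
qed

end
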